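(* Let $\mathcal{L}:\mathcal{M}_2\to\mathcal{M}_2$ be a doubly stochastic and primitive Liouvillian of the form $\mathcal{L}=T-\text{id}$ for a quantum channel $T$ represented by $\hat T\in\mathcal{M}_3$ in the Bloch sphere picture, and let $r=\sup_{x\in\mathbb{R}^3,\|x\|=1}|\langle x,\hat Tx\rangle|$. Then for all $t\geq0$ and all density matrices $\rho\in\mathcal{M}_2$, $$S(T_t(\rho))-S(\rho)\geq(1-e^{-2(1-r)t})(\log 2-S(\rho)),$$ where $T_t=e^{t\mathcal{L}}$.
   Context: $S(\rho)=-\text{tr}(\rho\log\rho)$. Bloch representation: states are $\rho=\frac12(\mathbb{1}_2+\sum_{i=1}^3x_i\sigma_i)$, $x\in\mathbb{R}^3$, $\sigma_i$ the Pauli matrices; a unital qubit channel acts as $x\mapsto\hat Tx$. Doubly stochastic Liouvillian: $\mathcal{L}(\mathbb{1})=0$; primitive: $e^{t\mathcal{L}}(\rho)\to\mathbb{1}/2$ for all states. *)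

theory Defs
  imports "HOL-Analysis.Analysis" "HOL-Library.Numeral_Type"
begin

type_synonym cmat = "complex^2^2"

definition cadj :: "cmat \<Rightarrow> cmat" where
  "cadj A = (\<chi> i j. cnj (A $ j $ i))"

text \<open>Pauli matrices sigma_1, sigma_2, sigma_3 (indexed by type 3: 1, 2, 3).\<close>
definition sigma1 :: cmat where
  "sigma1 = (\<chi> i j. if i = j then 0 else 1)"
definition sigma2 :: cmat where
  "sigma2 = (\<chi> i j. if i = j then 0 else if i = 0 then - \<i> else \<i>)"
definition sigma3 :: cmat where
  "sigma3 = (\<chi> i j. if i = j then (if i = 0 then 1 else -1) else 0)"

definition pauli :: "3 \<Rightarrow> cmat" where
  "pauli k = (if k = 1 then sigma1 else if k = 2 then sigma2 else sigma3)"

definition bloch :: "real^3 \<Rightarrow> cmat" where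
  "bloch x = (\<chi> i j. (1/2) * ((mat 1 :: cmat) $ i $ j
                     + (\<Sum>k\<in>UNIV. complex_of_real (x $ k) * pauli k $ i $ j)))"

definition density :: "cmat \<Rightarrow> bool" where
  "density \<rho> \<longleftrightarrow> cadj \<rho> = \<rho> \<and> trace \<rho> = 1 \<and>
     (\<forall>v :: complex^2. let q = (\<Sum>i\<in>UNIV. cnj (v $ i) * (\<rho> *v v) $ i)
                        in Im q = 0 \<and> Re q \<ge> 0)"

text \<open>Quantum channel on M_2 (completely positive, trace preserving), given by a
  Kraus representation.\<close>
definition quantum_channel :: "(cmat \<Rightarrow> cmat) \<Rightarrow> bool" where
  "quantum_channel T \<longleftrightarrow> (\<exists>(n::nat) (K :: nat \<Rightarrow> cmat).
      (\<forall>A. T A = (\<Sum>k<n. K k ** A ** cadj (K k))) \<and>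
      (\<Sum>k<n. cadj (K k) ** K k) = mat 1)"

definition semigroup :: "(cmat \<Rightarrow> cmat) \<Rightarrow> real \<Rightarrow> cmat \<Rightarrow> cmat" where
  "semigroup L t \<rho> = (\<Sum>n. (t ^ n / fact n) *\<^sub>R (L ^^ n) \<rho>)"

text \<open>von Neumann entropy S(rho) = - tr(rho log rho) for a Hermitian 2x2 matrix, computed
  on its two eigenvalues (tr +- sqrt(tr^2 - 4 det))/2, with natural log and 0 log 0 = 0.\<close>
definition vn_entropy :: "cmat \<Rightarrow> real" where
  "vn_entropy \<rho> = (let a = Re (trace \<rho>); d = Re (det \<rho>); s = sqrt (a\<^sup>2 - 4 * d);
                       l1 = (a + s) / 2; l2 = (a - s) / 2
                   in - (l1 * ln l1) - (l2 * ln l2))"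

end

theory Submission
  imports Defs "HOL-Real_Asymp.Real_Asymp"
begin

(* In Bloch coordinates a state is bloch x with |x| <= 1, its entropy is ln 2 - phi |x| with
   phi s = ((1 + s) ln (1 + s) + (1 - s) ln (1 - s)) / 2, and the semigroup acts linearly,
   x |-> exp (t (That - 1)) x.  Since x . That x <= r |x|^2, the Bloch vector shrinks at least
   like e^(-(1 - r) t), and complete positivity makes That a contraction, so r <= 1.  Finally
   phi s / s^2 is increasing, hence phi (l s) <= l^2 phi s for 0 <= l <= 1; with
   l = e^(-(1 - r) t) this is the claimed bound. *)

section \<open>Positive semidefinite matrices and quantum channels\<close>

definition quad_form :: "cmat \<Rightarrow> complex^2 \<Rightarrow> complex" where
  "quad_form A v = (\<Sum>i\<in>UNIV. cnj (v $ i) * (A *v v) $ i)"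

definition pos_semidef :: "cmat \<Rightarrow> bool" where
  "pos_semidef A \<longleftrightarrow> (\<forall>v. Im (quad_form A v) = 0 \<and> Re (quad_form A v) \<ge> 0)"

lemma density_imp_pos_semidef: "density \<rho> \<Longrightarrow> pos_semidef \<rho>"
  unfolding density_def pos_semidef_def quad_form_def Let_def by blast

lemma quad_form_congruence: "quad_form (K ** A ** cadj K) v = quad_form A (cadj K *v v)"
  unfolding quad_form_def
  by (simp add: matrix_vector_mul_assoc[symmetric] matrix_vector_mult_def matrix_matrix_mult_def
      sum_2 cadj_def algebra_simps)

lemma quad_form_sum: "quad_form (\<Sum>k<(n::nat). A k) v = (\<Sum>k<n. quad_form (A k) v)"
  by (induction n) (simp_all add: quad_form_def matrix_vector_mult_add_rdistrib sum.distrib distrib_left)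

lemma matrix_add_rdistrib: "((A :: 'a::semiring_1^'n^'m) + B) ** C = A ** C + B ** C"
  by (simp add: matrix_matrix_mult_def vec_eq_iff sum.distrib distrib_right)

lemma quantum_channel_add:
  assumes "quantum_channel T" shows "T (A + B) = T A + T B"
proof -
  obtain n :: nat and K :: "nat \<Rightarrow> cmat" where "\<And>A. T A = (\<Sum>k<n. K k ** A ** cadj (K k))"
    using assms unfolding quantum_channel_def by blast
  then show ?thesis by (simp add: matrix_add_ldistrib matrix_add_rdistrib sum.distrib)
qed

lemma quantum_channel_pos_semidef:
  assumes "quantum_channel T" "pos_semidef A" shows "pos_semidef (T A)"
proof -
  obtain n :: nat and K :: "nat \<Rightarrow> cmat" where "\<And>A. T A = (\<Sum>k<n. K k ** A ** cadj (K k))"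
    using assms(1) unfolding quantum_channel_def by blast
  then have "quad_form (T A) v = (\<Sum>k<n. quad_form A (cadj (K k) *v v))" for v
    by (simp add: quad_form_sum quad_form_congruence)
  then show ?thesis
    using assms(2) unfolding pos_semidef_def by (simp add: sum_nonneg)
qed

section \<open>Bloch coordinates\<close>

lemma bloch_entries:
  "bloch x $ 1 $ 1 = complex_of_real ((1 - x$3) / 2)"
  "bloch x $ 2 $ 2 = complex_of_real ((1 + x$3) / 2)"
  "bloch x $ 1 $ 2 = Complex (x$1 / 2) (x$2 / 2)"
  "bloch x $ 2 $ 1 = Complex (x$1 / 2) (- x$2 / 2)"
  by (simp_all add: bloch_def sum_3 pauli_def sigma1_def sigma2_def sigma3_def mat_def complex_eq_iff)

lemma norm_sq_vec3: "(norm (y :: real^3))\<^sup>2 = (y$1)\<^sup>2 + (y$2)\<^sup>2 + (y$3)\<^sup>2"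
  unfolding power2_norm_eq_inner by (simp add: inner_vec_def sum_3 power2_eq_square)

lemma Im_quad_form_bloch: "Im (quad_form (bloch y) v) = 0"
  by (simp add: quad_form_def sum_2 matrix_vector_mult_def bloch_entries algebra_simps)

lemma Re_quad_form_bloch: "Re (quad_form (bloch y) v) =
    (1 - y$3) / 2 * (cmod (v$1))\<^sup>2 + (1 + y$3) / 2 * (cmod (v$2))\<^sup>2
    + y$1 * (Re (v$1) * Re (v$2) + Im (v$1) * Im (v$2))
    + y$2 * (Im (v$1) * Re (v$2) - Re (v$1) * Im (v$2))"
  by (simp add: quad_form_def sum_2 matrix_vector_mult_def bloch_entries cmod_power2)
     (simp add: field_simps power2_eq_square)

lemma pos_semidef_bloch_imp_norm_le_1:
  assumes "pos_semidef (bloch y)" shows "norm y \<le> 1"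
proof -
  define a where "a = (1 - y$3) / 2"
  define d where "d = (1 + y$3) / 2"
  \<comment> \<open>Each test vector is a multiple of a column of the adjugate of bloch y, so the form
      evaluates to a diagonal entry times the determinant (1 - |y|^2) / 4.\<close>
  define v :: "complex^2" where "v = (\<chi> i. if i = 1 then Complex (y$1/2) (y$2/2) else Complex (- a) 0)"
  define w :: "complex^2" where "w = (\<chi> i. if i = 1 then Complex d 0 else - Complex (y$1/2) (- y$2/2))"
  have "Re (quad_form (bloch y) v) = a * (1 - (norm y)\<^sup>2) / 4"
    unfolding Re_quad_form_bloch norm_sq_vec3
    by (simp add: v_def a_def cmod_power2) (simp add: field_simps power2_eq_square)
  moreover have "Re (quad_form (bloch y) w) = d * (1 - (norm y)\<^sup>2) / 4"
    unfolding Re_quad_form_bloch norm_sq_vec3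
    by (simp add: w_def d_def cmod_power2) (simp add: field_simps power2_eq_square)
  moreover have "0 \<le> Re (quad_form (bloch y) v)" "0 \<le> Re (quad_form (bloch y) w)"
    using assms unfolding pos_semidef_def by blast+
  ultimately have "0 \<le> a * (1 - (norm y)\<^sup>2)" "0 \<le> d * (1 - (norm y)\<^sup>2)" by linarith+
  moreover have "a > 0 \<or> d > 0" by (auto simp: a_def d_def)
  ultimately have "(norm y)\<^sup>2 \<le> 1" by (auto simp: zero_le_mult_iff)
  then show ?thesis by (simp add: power_le_one_iff)
qed

lemma norm_le_1_imp_pos_semidef_bloch:
  assumes "norm y \<le> 1" shows "pos_semidef (bloch y)"
  unfolding pos_semidef_def
proof
  fix v :: "complex^2"
  define s where "s = (cmod (v$1))\<^sup>2 + (cmod (v$2))\<^sup>2"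
  define u :: "real^3" where "u = vector [2 * (Re (v$1) * Re (v$2) + Im (v$1) * Im (v$2)),
      2 * (Im (v$1) * Re (v$2) - Re (v$1) * Im (v$2)), (cmod (v$2))\<^sup>2 - (cmod (v$1))\<^sup>2]"
  have "(norm u)\<^sup>2 = s\<^sup>2"
    unfolding norm_sq_vec3 by (simp add: u_def s_def cmod_power2) (simp add: algebra_simps power2_eq_square)
  then have "norm u = s" by (simp add: s_def power2_eq_imp_eq)
  moreover have "norm y * s \<le> s" using assms by (simp add: s_def mult_left_le_one_le)
  ultimately have "\<bar>y \<bullet> u\<bar> \<le> s" using Cauchy_Schwarz_ineq2[of y u] by (metis order.trans)
  moreover have "Re (quad_form (bloch y) v) = (s + y \<bullet> u) / 2"
    unfolding Re_quad_form_bloch by (simp add: s_def u_def inner_vec_def sum_3) (simp add: field_simps)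
  ultimately show "Im (quad_form (bloch y) v) = 0 \<and> Re (quad_form (bloch y) v) \<ge> 0"
    by (simp add: Im_quad_form_bloch)
qed

lemma density_imp_bloch:
  assumes "density \<rho>" obtains x where "\<rho> = bloch x" "norm x \<le> 1"
proof -
  have herm: "cadj \<rho> = \<rho>" and tr: "trace \<rho> = 1" using assms unfolding density_def by auto
  have "cnj (\<rho>$1$1) = \<rho>$1$1" "cnj (\<rho>$2$2) = \<rho>$2$2" "cnj (\<rho>$1$2) = \<rho>$2$1"
    using herm unfolding cadj_def vec_eq_iff by auto
  then have "Im (\<rho>$1$1) = 0" "Im (\<rho>$2$2) = 0" "cnj (\<rho>$1$2) = \<rho>$2$1"
    by (simp_all add: complex_eq_iff)
  moreover have "\<rho>$1$1 + \<rho>$2$2 = 1" using tr by (simp add: trace_def sum_2)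
  ultimately have "\<rho> = bloch (vector [2 * Re (\<rho>$1$2), 2 * Im (\<rho>$1$2), Re (\<rho>$2$2) - Re (\<rho>$1$1)])"
    unfolding vec_eq_iff forall_2 by (auto simp: bloch_entries complex_eq_iff)
  with that show ?thesis
    using pos_semidef_bloch_imp_norm_le_1 density_imp_pos_semidef[OF assms] by metis
qed

lemma linear_bloch_offset: "linear (\<lambda>v. bloch v - bloch 0)"
  by (rule linearI) (simp_all add: vec_eq_iff forall_2 bloch_entries complex_eq_iff field_simps)

section \<open>Entropy in Bloch coordinates\<close>

definition entropy_deficit :: "real \<Rightarrow> real" where
  "entropy_deficit s = ((1 + s) * ln (1 + s) + (1 - s) * ln (1 - s)) / 2"

lemma vn_entropy_bloch:
  assumes "norm z \<le> 1" shows "vn_entropy (bloch z) = ln 2 - entropy_deficit (norm z)"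
proof -
  have half_ln: "a / 2 * ln (a / 2) = a / 2 * (ln a - ln 2)" if "0 \<le> a" for a :: real
    using that by (cases "a = 0") (simp_all add: ln_div)
  have tr: "Re (trace (bloch z)) = 1" by (simp add: trace_def sum_2 bloch_entries) (simp add: field_simps)
  have det: "Re (det (bloch z)) = (1 - (norm z)\<^sup>2) / 4"
    unfolding norm_sq_vec3 by (simp add: det_2 bloch_entries) (simp add: field_simps power2_eq_square)
  have "1\<^sup>2 - 4 * ((1 - (norm z)\<^sup>2) / 4) = (norm z)\<^sup>2" by (simp add: field_simps)
  then have sqrt: "sqrt (1\<^sup>2 - 4 * ((1 - (norm z)\<^sup>2) / 4)) = norm z" by simp
  show ?thesis
    unfolding vn_entropy_def Let_def tr det sqrt
    using half_ln[of "1 + norm z"] half_ln[of "1 - norm z"] assms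
    by (simp add: entropy_deficit_def field_simps)
qed

lemma continuous_on_x_ln: "continuous_on {0..} (\<lambda>x::real. x * ln x)"
  unfolding continuous_on_def
proof
  fix x :: real assume x: "x \<in> {0..}"
  show "((\<lambda>x. x * ln x) \<longlongrightarrow> x * ln x) (at x within {0..})"
  proof (cases "x = 0")
    case True
    have "((\<lambda>x::real. x * ln x) \<longlongrightarrow> 0) (at_right 0)" by real_asymp
    with True show ?thesis by (simp add: at_within_Ici_at_right)
  next
    case False
    with x have "isCont (\<lambda>x. x * ln x) x" by (auto intro!: continuous_intros)
    then show ?thesis using continuous_at_imp_continuous_within continuous_within by blast
  qed
qed

lemma continuous_on_entropy_deficit: "continuous_on {-1..1} entropy_deficit"
  unfolding entropy_deficit_def
  by (intro continuous_intros continuous_on_compose2[OF continuous_on_x_ln]) auto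

lemma entropy_deficit_deriv: "\<bar>s\<bar> < 1 \<Longrightarrow> DERIV entropy_deficit s :> artanh s"
  unfolding entropy_deficit_def artanh_def
  by (rule derivative_eq_intros refl | simp add: abs_less_iff ln_div)+

lemma artanh_nonneg:
  fixes s :: real assumes "0 \<le> s" "s < 1" shows "0 \<le> artanh s"
proof -
  have "1 \<le> (1 + s) / (1 - s)" using assms by (simp add: le_divide_eq)
  then show ?thesis by (simp add: artanh_def)
qed

lemma artanh_le:
  fixes s :: real assumes "0 \<le> s" "s < 1" shows "artanh s \<le> s / (1 - s\<^sup>2)"
proof (cases "0 < s")
  case True
  have "\<exists>\<xi>. 0 < \<xi> \<and> \<xi> < s \<and> artanh s - artanh 0 = (s - 0) * (1 / (1 - \<xi>\<^sup>2))"
    by (rule MVT2[OF True]) (use assms in \<open>auto intro!: artanh_real_has_field_derivative\<close>)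
  then obtain \<xi> where \<xi>: "0 < \<xi>" "\<xi> < s" and eq: "artanh s = s * (1 / (1 - \<xi>\<^sup>2))" by auto
  have "s * (1 / (1 - \<xi>\<^sup>2)) \<le> s * (1 / (1 - s\<^sup>2))"
    using \<xi> assms by (intro mult_left_mono divide_left_mono mult_pos_pos power_strict_mono)
      (auto simp: abs_square_less_1)
  then show ?thesis using eq by simp
qed (use assms in simp)

lemma entropy_deficit_le_artanh:
  assumes "0 \<le> s" "s < 1" shows "2 * entropy_deficit s \<le> s * artanh s"
proof -
  let ?k = "\<lambda>x. x * artanh x - 2 * entropy_deficit x"
  have "?k 0 \<le> ?k s"
  proof (rule DERIV_nonneg_imp_nondecreasing[OF assms(1)])
    fix x assume "0 \<le> x" "x \<le> s"
    then have x: "0 \<le> x" "x < 1" "\<bar>x\<bar> < 1" using assms by auto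
    have "DERIV ?k x :> artanh x + x * (1 / (1 - x\<^sup>2)) - 2 * artanh x"
      by (rule derivative_eq_intros refl entropy_deficit_deriv x | simp)+
    moreover have "0 \<le> artanh x + x * (1 / (1 - x\<^sup>2)) - 2 * artanh x"
      using artanh_le[OF x(1,2)] by simp
    ultimately show "\<exists>y. DERIV ?k x :> y \<and> 0 \<le> y" by blast
  qed
  then show ?thesis by (simp add: entropy_deficit_def)
qed

lemma entropy_deficit_mono:
  assumes "0 \<le> a" "a \<le> b" "b \<le> 1" shows "entropy_deficit a \<le> entropy_deficit b"
proof (rule DERIV_nonneg_imp_increasing_open[OF assms(2)])
  fix x assume "a < x" "x < b"
  then have "0 \<le> x" "x < 1" using assms by auto
  then show "\<exists>y. DERIV entropy_deficit x :> y \<and> y \<ge> 0"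
    using entropy_deficit_deriv[of x] artanh_nonneg[of x] by auto
next
  show "continuous_on {a..b} entropy_deficit"
    using assms by (intro continuous_on_subset[OF continuous_on_entropy_deficit]) auto
qed

lemma entropy_deficit_nonneg: "0 \<le> s \<Longrightarrow> s \<le> 1 \<Longrightarrow> 0 \<le> entropy_deficit s"
  using entropy_deficit_mono[of 0 s] by (simp add: entropy_deficit_def)

lemma entropy_deficit_div_sq_mono:
  assumes "0 < a" "a \<le> b" "b \<le> 1"
  shows "entropy_deficit a / a\<^sup>2 \<le> entropy_deficit b / b\<^sup>2"
proof (rule DERIV_nonneg_imp_increasing_open[OF assms(2)])
  fix x assume "a < x" "x < b"
  then have x: "0 < x" "x < 1" using assms by auto
  then have "DERIV (\<lambda>s. entropy_deficit s / s\<^sup>2) x :>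
      (artanh x * x\<^sup>2 - entropy_deficit x * (2 * x)) / (x\<^sup>2 * x\<^sup>2)"
    by (auto intro!: derivative_eq_intros entropy_deficit_deriv)
  moreover have "0 \<le> artanh x * x\<^sup>2 - entropy_deficit x * (2 * x)"
    using mult_right_mono[OF entropy_deficit_le_artanh[of x] less_imp_le[OF x(1)]] x
    by (simp add: power2_eq_square algebra_simps)
  ultimately show "\<exists>y. DERIV (\<lambda>s. entropy_deficit s / s\<^sup>2) x :> y \<and> y \<ge> 0" by force
next
  show "continuous_on {a..b} (\<lambda>s. entropy_deficit s / s\<^sup>2)"
    using assms by (intro continuous_intros continuous_on_subset[OF continuous_on_entropy_deficit]) auto
qed

lemma entropy_deficit_scale:
  assumes "0 \<le> l" "l \<le> 1" "0 \<le> s" "s \<le> 1"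
  shows "entropy_deficit (l * s) \<le> l\<^sup>2 * entropy_deficit s"
proof (cases "l * s = 0")
  case True
  then show ?thesis using entropy_deficit_nonneg[OF assms(3,4)] assms by (auto simp: entropy_deficit_def)
next
  case False
  then have "0 < l" "0 < s" using assms by (auto simp: less_le)
  moreover have "entropy_deficit (l * s) / (l * s)\<^sup>2 \<le> entropy_deficit s / s\<^sup>2"
    using calculation assms by (intro entropy_deficit_div_sq_mono) (auto simp: mult_left_le_one_le)
  ultimately show ?thesis by (simp add: field_simps power_mult_distrib)
qed

section \<open>Linear flows\<close>

definition linear_flow :: "real^'n^'n \<Rightarrow> real \<Rightarrow> real^'n \<Rightarrow> real^'n" where
  "linear_flow M t x = (\<Sum>n. (t ^ n / fact n) *\<^sub>R ((\<lambda>v. M *v v) ^^ n) x)"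

lemma summable_exp_series_bound:
  fixes f :: "nat \<Rightarrow> 'a::banach"
  assumes "\<And>n. norm (f n) \<le> K ^ n * B"
  shows "summable (\<lambda>n. (t ^ n / fact n) *\<^sub>R f n)"
proof (rule summable_norm_cancel, rule summable_comparison_test)
  show "summable (\<lambda>n. B * (inverse (fact n) * (\<bar>t\<bar> * K) ^ n))"
    by (intro summable_mult summable_exp)
  have "norm ((t ^ n / fact n) *\<^sub>R f n) \<le> (\<bar>t\<bar> ^ n / fact n) * (K ^ n * B)" for n
    by (simp add: power_abs divide_right_mono mult_left_mono assms)
  then show "\<exists>N. \<forall>n\<ge>N. norm (norm ((t ^ n / fact n) *\<^sub>R f n)) \<le> B * (inverse (fact n) * (\<bar>t\<bar> * K) ^ n)"
    by (simp add: power_mult_distrib field_simps)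
qed

lemma linear_flow_sums: "(\<lambda>n. (t ^ n / fact n) *\<^sub>R ((\<lambda>v. M *v v) ^^ n) x) sums linear_flow M t x"
proof -
  obtain K where K: "K > 0" "\<And>v. norm (M *v v) \<le> norm v * K"
    using bounded_linear.pos_bounded[OF matrix_vector_mul_bounded_linear] by blast
  have "norm (((\<lambda>v. M *v v) ^^ n) x) \<le> K ^ n * norm x" for n
  proof (induction n)
    case (Suc n)
    then show ?case
      using K order.trans[OF K(2) mult_right_mono[OF Suc]] by (simp add: algebra_simps)
  qed simp
  then show ?thesis unfolding linear_flow_def by (intro summable_sums summable_exp_series_bound)
qed

lemma linear_flow_0: "linear_flow M 0 x = x"
proof -
  have "(\<lambda>n. (0 ^ n / fact n) *\<^sub>R ((\<lambda>v. M *v v) ^^ n) x) = (\<lambda>n. if n = 0 then x else 0)"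
    by (auto simp: fun_eq_iff)
  then show ?thesis using linear_flow_sums[of 0 M x] sums_single[of 0 "\<lambda>_. x"] sums_unique2 by metis
qed

lemma linear_flow_component_deriv:
  "DERIV (\<lambda>t. linear_flow M t x $ i) t :> (M *v linear_flow M t x) $ i"
proof -
  define c where "c n = (((\<lambda>v. M *v v) ^^ n) x) $ i / fact n" for n
  have comp: "(\<lambda>n. c n * t ^ n) sums (linear_flow M t x $ i)" for t
    using bounded_linear.sums[OF bounded_linear_vec_nth linear_flow_sums] by (simp add: c_def field_simps)
  have bl: "bounded_linear (\<lambda>v. (M *v v) $ i)"
    by (intro bounded_linear_compose[OF bounded_linear_vec_nth] matrix_vector_mul_bounded_linear)
  have "(\<lambda>n. (M *v ((t ^ n / fact n) *\<^sub>R ((\<lambda>v. M *v v) ^^ n) x)) $ i) sums ((M *v linear_flow M t x) $ i)"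
    by (rule bounded_linear.sums[OF bl linear_flow_sums])
  moreover have "(M *v ((t ^ n / fact n) *\<^sub>R ((\<lambda>v. M *v v) ^^ n) x)) $ i = diffs c n * t ^ n" for n
    by (simp add: diffs_def c_def matrix_vector_mult_scaleR fact_Suc del: of_nat_Suc)
  ultimately have "(\<lambda>n. diffs c n * t ^ n) sums ((M *v linear_flow M t x) $ i)" by simp
  moreover have "DERIV (\<lambda>t. \<Sum>n. c n * t ^ n) t :> (\<Sum>n. diffs c n * t ^ n)"
    by (rule termdiffs_strong'[where K = "\<bar>t\<bar> + 1"]) (use comp sums_summable in auto)
  ultimately show ?thesis using comp by (simp add: sums_iff)
qed

lemma linear_flow_inner_self_deriv:
  "DERIV (\<lambda>t. linear_flow M t x \<bullet> linear_flow M t x) t :>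
     2 * (linear_flow M t x \<bullet> (M *v linear_flow M t x))"
proof -
  let ?y = "linear_flow M t x"
  have "DERIV (\<lambda>t. \<Sum>i\<in>UNIV. linear_flow M t x $ i * linear_flow M t x $ i) t :>
          (\<Sum>i\<in>UNIV. ?y $ i * (M *v ?y) $ i + (M *v ?y) $ i * ?y $ i)"
    by (intro DERIV_sum DERIV_mult' linear_flow_component_deriv)
  then show ?thesis
    by (simp add: inner_vec_def sum.distrib[symmetric] sum_distrib_left algebra_simps)
qed

lemma linear_flow_decay:
  assumes "\<And>v. v \<bullet> (A *v v) \<le> r * (v \<bullet> v)" and "0 \<le> t"
  shows "norm (linear_flow (A - mat 1) t x) \<le> exp (- (1 - r) * t) * norm x"
proof -
  define M where "M = A - mat 1"
  define E where "E = exp ((1 - r) * t)"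
  define g where "g s = exp (2 * (1 - r) * s) * (linear_flow M s x \<bullet> linear_flow M s x)" for s
  have "g t \<le> g 0"
  proof (rule DERIV_nonpos_imp_nonincreasing[OF assms(2)])
    fix s :: real
    let ?y = "linear_flow M s x"
    have "DERIV g s :> exp (2 * (1 - r) * s) * (2 * (1 - r) * (?y \<bullet> ?y) + 2 * (?y \<bullet> (M *v ?y)))"
      unfolding g_def
      by (rule derivative_eq_intros linear_flow_inner_self_deriv refl | simp add: algebra_simps)+
    moreover have "?y \<bullet> (M *v ?y) = ?y \<bullet> (A *v ?y) - ?y \<bullet> ?y"
      by (simp add: M_def matrix_vector_mult_diff_rdistrib inner_diff_right)
    then have "2 * (1 - r) * (?y \<bullet> ?y) + 2 * (?y \<bullet> (M *v ?y)) \<le> 0"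
      using assms(1)[of ?y] by (simp add: algebra_simps)
    ultimately show "\<exists>y. DERIV g s :> y \<and> y \<le> 0" by (auto simp: mult_nonneg_nonpos)
  qed
  moreover have "exp (2 * (1 - r) * t) = E\<^sup>2"
    unfolding E_def exp_double[symmetric] by (simp add: mult.assoc)
  ultimately have "(E * norm (linear_flow M t x))\<^sup>2 \<le> (norm x)\<^sup>2"
    by (simp add: g_def linear_flow_0 power2_norm_eq_inner power_mult_distrib)
  then have "E * norm (linear_flow M t x) \<le> norm x" by (rule power2_le_imp_le) simp
  then have "norm (linear_flow M t x) \<le> inverse E * norm x"
    using exp_gt_zero[of "(1 - r) * t"] by (simp add: E_def field_simps)
  then show ?thesis unfolding M_def E_def mult_minus_left exp_minus .
qed

section \<open>The semigroup and the numerical radius in Bloch coordinates\<close>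

lemma semigroup_bloch:
  assumes add: "\<And>A B. L (A + B) = L A + L B"
    and gen: "\<And>x. L (bloch x) = bloch (A *v x) - bloch x"
  shows "semigroup L t (bloch x) = bloch (linear_flow (A - mat 1) t x)"
proof -
  define M where "M = A - mat 1"
  define lin where "lin v = bloch v - bloch 0" for v
  have lin: "linear lin" unfolding lin_def by (rule linear_bloch_offset)
  have L0: "L 0 = 0" using add[of 0 0] by simp
  have "L (bloch 0) = 0" using gen[of 0] by simp
  then have Llin: "L (lin v) = lin (M *v v)" for v
    using add[of "lin v" "bloch 0"] gen[of v]
    by (simp add: lin_def M_def matrix_vector_mult_diff_rdistrib linear_diff[OF lin, unfolded lin_def])
  have pow: "(L ^^ n) (bloch x) = (if n = 0 then bloch 0 else 0) + lin (((\<lambda>v. M *v v) ^^ n) x)" for n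
  proof (induction n)
    case (Suc n)
    then show ?case by (simp add: add L0 Llin \<open>L (bloch 0) = 0\<close>)
  qed (simp add: lin_def)
  have "(\<lambda>n. (t ^ n / fact n) *\<^sub>R (if n = 0 then bloch 0 else (0::cmat))) = (\<lambda>n. if n = 0 then bloch 0 else 0)"
    by (auto simp: fun_eq_iff)
  then have "(\<lambda>n. (t ^ n / fact n) *\<^sub>R (if n = 0 then bloch 0 else (0::cmat))) sums bloch 0"
    using sums_single[of 0 "\<lambda>_. bloch 0"] by simp
  moreover have "(\<lambda>n. (t ^ n / fact n) *\<^sub>R lin (((\<lambda>v. M *v v) ^^ n) x)) sums lin (linear_flow M t x)"
    using bounded_linear.sums[OF linear_conv_bounded_linear[THEN iffD1, OF lin] linear_flow_sums]
    by (simp add: linear_scale[OF lin])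
  ultimately have "(\<lambda>n. (t ^ n / fact n) *\<^sub>R (L ^^ n) (bloch x)) sums (bloch 0 + lin (linear_flow M t x))"
    unfolding pow scaleR_right_distrib by (rule sums_add)
  then show ?thesis unfolding semigroup_def M_def by (simp add: sums_iff lin_def)
qed

lemma bloch_channel_contraction:
  assumes "quantum_channel T" and "\<And>x. T (bloch x) = bloch (A *v x)"
  shows "norm (A *v v) \<le> norm v"
proof (cases "v = 0")
  case False
  define u where "u = (1 / norm v) *\<^sub>R v"
  have "norm u = 1" using False by (simp add: u_def)
  then have "pos_semidef (T (bloch u))"
    by (intro quantum_channel_pos_semidef[OF assms(1)] norm_le_1_imp_pos_semidef_bloch) simp
  then have "pos_semidef (bloch (A *v u))" by (simp only: assms(2))
  then have "norm (A *v u) \<le> 1" by (rule pos_semidef_bloch_imp_norm_le_1)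
  then show ?thesis using False by (simp add: u_def matrix_vector_mult_scaleR divide_le_eq)
qed simp

definition numerical_radius :: "real^'n^'n \<Rightarrow> real" where
  "numerical_radius A = Sup {\<bar>x \<bullet> (A *v x)\<bar> | x. norm x = 1}"

lemma contraction_numerical_radius:
  fixes A :: "real^'n^'n"
  assumes contr: "\<And>v. norm (A *v v) \<le> norm v"
  shows "numerical_radius A \<le> 1" and "v \<bullet> (A *v v) \<le> numerical_radius A * (v \<bullet> v)"
proof -
  define R where "R = {\<bar>x \<bullet> (A *v x)\<bar> | x. norm x = 1}"
  have R_le_1: "\<rho> \<le> 1" if "\<rho> \<in> R" for \<rho>
  proof -
    obtain x where "\<rho> = \<bar>x \<bullet> (A *v x)\<bar>" "norm x = 1" using \<open>\<rho> \<in> R\<close> unfolding R_def by blast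
    moreover have "\<bar>x \<bullet> (A *v x)\<bar> \<le> norm x * norm (A *v x)" by (rule Cauchy_Schwarz_ineq2)
    ultimately show ?thesis using contr[of x] by simp
  qed
  have "R \<noteq> {}" unfolding R_def using norm_axis_1 by blast
  then show "numerical_radius A \<le> 1" unfolding numerical_radius_def R_def[symmetric]
    using R_le_1 by (rule cSup_least)
  show "v \<bullet> (A *v v) \<le> numerical_radius A * (v \<bullet> v)"
  proof (cases "v = 0")
    case False
    define u where "u = (1 / norm v) *\<^sub>R v"
    have "norm u = 1" using False by (simp add: u_def)
    then have "\<bar>u \<bullet> (A *v u)\<bar> \<in> R" unfolding R_def by (intro CollectI exI[of _ u]) simp
    then have "u \<bullet> (A *v u) \<le> numerical_radius A"
      unfolding numerical_radius_def R_def[symmetric]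
      using R_le_1 by (meson abs_ge_self bdd_above_def cSup_upper order.trans)
    moreover have "u \<bullet> (A *v u) = (v \<bullet> (A *v v)) / (v \<bullet> v)"
      by (simp add: u_def matrix_vector_mult_scaleR power2_eq_square flip: power2_norm_eq_inner)
    ultimately show ?thesis using False by (simp add: divide_le_eq)
  qed simp
qed

theorem mainTheorem9:
  fixes T :: "cmat \<Rightarrow> cmat" and That :: "real^3^3" and L :: "cmat \<Rightarrow> cmat" and r :: real
  assumes chan: "quantum_channel T"
    and rep: "\<forall>x. T (bloch x) = bloch (That *v x)"
    and L_def: "L = (\<lambda>A. T A - A)"
    and dstoch: "L (mat 1) = 0"
    and prim: "\<forall>\<rho>. density \<rho> \<longrightarrow> ((\<lambda>t. semigroup L t \<rho>) \<longlongrightarrow> (1/2 :: real) *\<^sub>R (mat 1 :: cmat)) at_top"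
    and r_def: "r = Sup {\<bar>x \<bullet> (That *v x)\<bar> | x. norm x = 1}"
  shows "\<forall>t \<ge> 0. \<forall>\<rho>. density \<rho> \<longrightarrow>
           vn_entropy (semigroup L t \<rho>) - vn_entropy \<rho>
             \<ge> (1 - exp (- 2 * (1 - r) * t)) * (ln 2 - vn_entropy \<rho>)"
proof (intro allI impI)
  fix t :: real and \<rho> :: cmat
  assume "0 \<le> t"
  assume "density \<rho>"
  then obtain x where \<rho>: "\<rho> = bloch x" and x: "norm x \<le> 1" by (rule density_imp_bloch)
  have contr: "norm (That *v v) \<le> norm v" for v using bloch_channel_contraction chan rep by blast
  have r1: "r \<le> 1" and rb: "v \<bullet> (That *v v) \<le> r * (v \<bullet> v)" for v
    using contraction_numerical_radius[OF contr] unfolding r_def numerical_radius_def by auto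
  define l where "l = exp (- (1 - r) * t)"
  define y where "y = linear_flow (That - mat 1) t x"
  have "semigroup L t \<rho> = bloch y"
    unfolding \<rho> y_def using rep chan by (intro semigroup_bloch) (simp_all add: L_def quantum_channel_add)
  have decay: "norm y \<le> l * norm x"
    unfolding y_def l_def by (rule linear_flow_decay[OF rb \<open>0 \<le> t\<close>])
  have "0 \<le> l" "l \<le> 1" using r1 \<open>0 \<le> t\<close> by (auto simp: l_def mult_nonpos_nonneg)
  then have "l * norm x \<le> 1" using x by (simp add: mult_le_one)
  then have "norm y \<le> 1" using decay by linarith
  have "entropy_deficit (norm y) \<le> entropy_deficit (l * norm x)"
    using decay \<open>l * norm x \<le> 1\<close> by (intro entropy_deficit_mono) auto
  also have "\<dots> \<le> l\<^sup>2 * entropy_deficit (norm x)"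
    using \<open>0 \<le> l\<close> \<open>l \<le> 1\<close> x by (intro entropy_deficit_scale) auto
  also have "l\<^sup>2 = exp (- 2 * (1 - r) * t)" by (simp add: l_def power2_eq_square flip: exp_add)
  finally have "entropy_deficit (norm y) \<le> exp (- 2 * (1 - r) * t) * entropy_deficit (norm x)" .
  with \<open>norm y \<le> 1\<close> show "vn_entropy (semigroup L t \<rho>) - vn_entropy \<rho>
      \<ge> (1 - exp (- 2 * (1 - r) * t)) * (ln 2 - vn_entropy \<rho>)"
    using \<open>semigroup L t \<rho> = bloch y\<close> by (simp add: \<rho> x vn_entropy_bloch algebra_simps)
qed

end
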